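(* There is an absolute constant $C>0$ such that the following holds. Let $n,d,k\ge1$, let $\phi:\mathbb{R}\to\mathbb{R}$ be $L$-Lipschitz with $\phi(0)=0$, let $b>0$, and let $x_1,\dots,x_n,x'_1,\dots,x'_n\in\mathbb{R}^d$ satisfy $\|x_i\|_2,\|x'_i\|_2\le b$. For $a>0$ let $\mathcal{G}^k_a=\{A\in\mathbb{R}^{d\times k}:\|A\|_{2,\infty}\le a\}$. Then $$\widehat{\mathfrak{R}}\big(\mathcal{F}_k(\mathcal{G}^k_a)\big)\le C\left(\frac1n+\frac{a^2b^2L^2}{\sqrt n}\sqrt{\log(2d)}\,\log\big(2+n\,b^2a^2L^2\big)\right);$$ in particular the bound does not depend on $k$.
   Context: For $A\in\mathbb{R}^{d\times k}$ with columns $A_{\cdot 1},\dots,A_{\cdot k}$: $\|A\|_{2,\infty}=\max_{j\le k}\|A_{\cdot j}\|_2$. For $u,v\in\mathbb{R}^k$, $\zeta_k(u,v)=\frac1k\|u-v\|_2^2$. The function $\phi$ is applied coordinatewise to vectors. Given fixed points $x_1,\dots,x_n,x'_1,\dots,x'_n\in\mathbb{R}^d$ and a set $\mathcal{G}\subset\mathbb{R}^{d\times k}$, define $\mathcal{F}_k(\mathcal{G})=\{(\zeta_k(\phi(A^tx_i),\phi(A^tx'_i)))_{i=1}^n : A\in\mathcal{G}\}\subset\mathbb{R}^n$. For a set $\mathcal{F}\subset\mathbb{R}^n$, $\widehat{\mathfrak{R}}(\mathcal{F})=\frac1n\mathbb{E}_\varepsilon\sup_{f\in\mathcal{F}}\sum_{i=1}^n\varepsilon_if_i$,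 where $\varepsilon_1,\dots,\varepsilon_n$ are i.i.d. uniform on $\{-1,1\}$. *)

theory Defs
  imports "HOL-Analysis.Analysis"
begin

text \<open>Dimensions vary inside the statement, so vectors in R^d are functions
  nat => real indexed by i < d, and d x k matrices are nat => nat => real
  (entry A i j, i < d, j < k), taken zero outside the index range.\<close>

definition matrices :: "nat \<Rightarrow> nat \<Rightarrow> (nat \<Rightarrow> nat \<Rightarrow> real) set" where
  "matrices d k = {A. \<forall>i j. \<not> (i < d \<and> j < k) \<longrightarrow> A i j = 0}"

definition norm_2_inf :: "nat \<Rightarrow> nat \<Rightarrow> (nat \<Rightarrow> nat \<Rightarrow> real) \<Rightarrow> real" where
  "norm_2_inf d k A = Max {sqrt (\<Sum>i<d. (A i j)\<^sup>2) | j. j < k}"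

definition G_ball :: "nat \<Rightarrow> nat \<Rightarrow> real \<Rightarrow> (nat \<Rightarrow> nat \<Rightarrow> real) set" where
  "G_ball d k a = {A \<in> matrices d k. norm_2_inf d k A \<le> a}"

definition matT_vec :: "nat \<Rightarrow> (nat \<Rightarrow> nat \<Rightarrow> real) \<Rightarrow> (nat \<Rightarrow> real) \<Rightarrow> nat \<Rightarrow> real" where
  "matT_vec d A x = (\<lambda>j. \<Sum>i<d. A i j * x i)"

definition zeta :: "nat \<Rightarrow> (nat \<Rightarrow> real) \<Rightarrow> (nat \<Rightarrow> real) \<Rightarrow> real" where
  "zeta k u v = (1 / real k) * (\<Sum>j<k. (u j - v j)\<^sup>2)"

definition F_class ::
  "nat \<Rightarrow> nat \<Rightarrow> nat \<Rightarrow> (real \<Rightarrow> real) \<Rightarrow> (nat \<Rightarrow> nat \<Rightarrow> real) \<Rightarrow> (nat \<Rightarrow> nat \<Rightarrow> real)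
    \<Rightarrow> (nat \<Rightarrow> nat \<Rightarrow> real) set \<Rightarrow> (nat \<Rightarrow> real) set" where
  "F_class n d k \<phi> x x' G =
     (\<lambda>A. (\<lambda>t. if t < n then zeta k (\<lambda>j. \<phi> (matT_vec d A (x t) j)) (\<lambda>j. \<phi> (matT_vec d A (x' t) j)) else 0)) ` G"

text \<open>Empirical Rademacher complexity: expectation over uniform signs in {-1,1}^n,
  written as the average over all 2^n sign vectors.\<close>
definition rademacher :: "nat \<Rightarrow> (nat \<Rightarrow> real) set \<Rightarrow> real" where
  "rademacher n F = (1 / real n) *
     ((\<Sum>\<epsilon>\<in>PiE {..<n} (\<lambda>_. {-1, 1}). Sup ((\<lambda>f. \<Sum>i<n. \<epsilon> i * f i) ` F)) / 2 ^ n)"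

end

theory Submission
  imports Defs
begin

text \<open>Each entry of the class is an average over the columns \<open>w\<close> of \<open>A\<close> of
  \<open>(\<phi> \<langle>w, x\<^sub>t\<rangle> - \<phi> \<langle>w, x'\<^sub>t\<rangle>)\<^sup>2\<close>, so the supremum over \<open>A\<close> is at most the supremum over
  a single column of norm at most \<open>a\<close>; this is why \<open>k\<close> drops out. On that ball the loss
  \<open>(\<phi> p - \<phi> q)\<^sup>2\<close> is \<open>4L\<^sup>2ab\<close>-Lipschitz in \<open>(p, q)\<close> for the l1-norm, so a contraction
  argument with one sign vector per coordinate reduces the problem to the linear class
  \<open>w \<mapsto> (\<langle>w, x\<^sub>t\<rangle>, \<langle>w, x'\<^sub>t\<rangle>)\<close>, whose Rademacher average is at most \<open>ab \<surd>(2n)\<close> by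
  Cauchy-Schwarz and Jensen. This gives \<open>8 \<surd>2 a\<^sup>2b\<^sup>2L\<^sup>2 / \<surd>n\<close>, and the logarithmic factors of
  the claimed bound are at least \<open>1/4\<close>.\<close>

definition sign_vectors :: "nat \<Rightarrow> (nat \<Rightarrow> real) set" where
  "sign_vectors m = PiE {..<m} (\<lambda>_. {-1, 1})"

definition sign_avg :: "nat \<Rightarrow> ((nat \<Rightarrow> real) \<Rightarrow> real) \<Rightarrow> real" where
  "sign_avg m f = (\<Sum>\<epsilon>\<in>sign_vectors m. f \<epsilon>) / 2 ^ m"

definition sign_avg2 :: "nat \<Rightarrow> ((nat \<Rightarrow> real) \<Rightarrow> (nat \<Rightarrow> real) \<Rightarrow> real) \<Rightarrow> real" where
  "sign_avg2 m g = sign_avg m (\<lambda>\<alpha>. sign_avg m (\<lambda>\<beta>. g \<alpha> \<beta>))"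

lemma card_sign_vectors: "card (sign_vectors m) = 2 ^ m"
proof -
  have "card {-1::real, 1} = 2" by simp
  then show ?thesis unfolding sign_vectors_def by (simp add: card_PiE del: card_insert_disjoint)
qed

lemma sign_avg_Suc:
  "sign_avg (Suc m) f = (\<Sum>s\<in>{-1,1}. sign_avg m (\<lambda>\<epsilon>. f (\<epsilon>(m := s)))) / 2"
proof -
  let ?upd = "\<lambda>(s, \<epsilon>). \<epsilon>(m := s)"
  have eq: "sign_vectors (Suc m) = ?upd ` ({-1,1} \<times> sign_vectors m)"
    unfolding sign_vectors_def lessThan_Suc by (simp add: PiE_insert_eq)
  have inj: "inj_on ?upd ({-1,1} \<times> sign_vectors m)"
    unfolding sign_vectors_def using inj_combinator[of m "{..<m}" "\<lambda>_. {-1::real,1}"] by simp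
  have "(\<Sum>\<epsilon>\<in>sign_vectors (Suc m). f \<epsilon>) = (\<Sum>s\<in>{-1,1}. \<Sum>\<epsilon>\<in>sign_vectors m. f (\<epsilon>(m := s)))"
    unfolding eq sum.reindex[OF inj] by (simp add: sum.cartesian_product case_prod_beta)
  then show ?thesis
    unfolding sign_avg_def by (simp add: field_simps)
qed

lemma sign_avg_mono:
  "(\<And>\<epsilon>. \<epsilon> \<in> sign_vectors m \<Longrightarrow> f \<epsilon> \<le> g \<epsilon>) \<Longrightarrow> sign_avg m f \<le> sign_avg m g"
  unfolding sign_avg_def by (intro divide_right_mono sum_mono) auto

lemma sign_avg_add: "sign_avg m (\<lambda>\<epsilon>. f \<epsilon> + g \<epsilon>) = sign_avg m f + sign_avg m g"
  unfolding sign_avg_def by (simp add: sum.distrib add_divide_distrib)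

lemma sign_avg_sum:
  "sign_avg m (\<lambda>\<epsilon>. \<Sum>i\<in>I. f i \<epsilon>) = (\<Sum>i\<in>I. sign_avg m (f i))"
  unfolding sign_avg_def by (simp add: sum.swap[of _ I] sum_divide_distrib)

lemma sign_avg_mult_left: "sign_avg m (\<lambda>\<epsilon>. c * f \<epsilon>) = c * sign_avg m f"
  unfolding sign_avg_def by (simp add: sum_distrib_left)

lemma sign_avg_divide: "sign_avg m (\<lambda>\<epsilon>. f \<epsilon> / c) = sign_avg m f / c"
  unfolding sign_avg_def by (simp add: sum_divide_distrib mult.commute)

lemma sign_avg_const: "sign_avg m (\<lambda>_. c) = c"
  unfolding sign_avg_def by (simp add: card_sign_vectors)

lemma sign_avg_nonneg: "(\<And>\<epsilon>. 0 \<le> f \<epsilon>) \<Longrightarrow> 0 \<le> sign_avg m f"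
  using sign_avg_mono[of m "\<lambda>_. 0" f] by (simp add: sign_avg_const)

lemma sign_avg_le_sqrt: "sign_avg m f \<le> sqrt (sign_avg m (\<lambda>\<epsilon>. (f \<epsilon>)\<^sup>2))"
proof (rule real_le_rsqrt)
  have "(\<Sum>\<epsilon>\<in>sign_vectors m. f \<epsilon>)\<^sup>2 \<le> (\<Sum>\<epsilon>\<in>sign_vectors m. (f \<epsilon>)\<^sup>2) * 2 ^ m"
    using sum_squared_le_sum_of_squares[of f "sign_vectors m"] by (simp add: card_sign_vectors)
  then show "(sign_avg m f)\<^sup>2 \<le> sign_avg m (\<lambda>\<epsilon>. (f \<epsilon>)\<^sup>2)"
    unfolding sign_avg_def by (simp add: power_divide field_simps power2_eq_square)
qed

lemma sign_avg2_Suc: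
  "sign_avg2 (Suc m) g =
     sign_avg2 m (\<lambda>\<alpha> \<beta>. (\<Sum>s\<in>{-1,1}. \<Sum>s'\<in>{-1,1}. g (\<alpha>(m := s)) (\<beta>(m := s'))) / 4)"
  unfolding sign_avg2_def sign_avg_Suc
  by (simp add: sign_avg_add sign_avg_divide add_divide_distrib)

lemma sign_avg2_mono:
  "(\<And>\<alpha> \<beta>. g \<alpha> \<beta> \<le> h \<alpha> \<beta>) \<Longrightarrow> sign_avg2 m g \<le> sign_avg2 m h"
  unfolding sign_avg2_def by (intro sign_avg_mono) auto

lemma sign_avg2_add:
  "sign_avg2 m (\<lambda>\<alpha> \<beta>. g \<alpha> \<beta> + h \<alpha> \<beta>) = sign_avg2 m g + sign_avg2 m h"
  unfolding sign_avg2_def by (simp add: sign_avg_add)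

lemma sign_avg2_mult_left: "sign_avg2 m (\<lambda>\<alpha> \<beta>. c * g \<alpha> \<beta>) = c * sign_avg2 m g"
  unfolding sign_avg2_def by (simp add: sign_avg_mult_left)

lemma sign_avg2_le_sqrt: "sign_avg2 m g \<le> sqrt (sign_avg2 m (\<lambda>\<alpha> \<beta>. (g \<alpha> \<beta>)\<^sup>2))"
proof -
  have "sign_avg2 m g \<le> sign_avg m (\<lambda>\<alpha>. sqrt (sign_avg m (\<lambda>\<beta>. (g \<alpha> \<beta>)\<^sup>2)))"
    unfolding sign_avg2_def by (intro sign_avg_mono sign_avg_le_sqrt)
  also have "\<dots> \<le> sqrt (sign_avg m (\<lambda>\<alpha>. (sqrt (sign_avg m (\<lambda>\<beta>. (g \<alpha> \<beta>)\<^sup>2)))\<^sup>2))"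
    by (rule sign_avg_le_sqrt)
  also have "\<dots> = sqrt (sign_avg2 m (\<lambda>\<alpha> \<beta>. (g \<alpha> \<beta>)\<^sup>2))"
    unfolding sign_avg2_def
    by (simp add: sign_avg_nonneg)
  finally show ?thesis .
qed

lemma sum_lessThan_Suc_fun_upd:
  "(\<Sum>t<Suc m. (\<epsilon>(m := s)) t * f t) = (\<Sum>t<m. \<epsilon> t * f t) + s * f m"
proof -
  have "(\<Sum>t<m. (\<epsilon>(m := s)) t * f t) = (\<Sum>t<m. \<epsilon> t * f t)"
    by (rule sum.cong) auto
  then show ?thesis by simp
qed

lemma sum_lessThan_Suc_fun_upd2:
  "(\<Sum>t<Suc m. (\<alpha>(m := s)) t * f t + (\<beta>(m := s')) t * g t)
     = (\<Sum>t<m. \<alpha> t * f t + \<beta> t * g t) + (s * f m + s' * g m)"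
proof -
  have "(\<Sum>t<m. (\<alpha>(m := s)) t * f t + (\<beta>(m := s')) t * g t) = (\<Sum>t<m. \<alpha> t * f t + \<beta> t * g t)"
    by (rule sum.cong) auto
  then show ?thesis by simp
qed

lemma sign_avg_square_sum:
  "sign_avg m (\<lambda>\<epsilon>. (c + (\<Sum>t<m. \<epsilon> t * v t))\<^sup>2) = c\<^sup>2 + (\<Sum>t<m. (v t)\<^sup>2)"
proof (induction m arbitrary: c)
  case 0
  then show ?case by (simp add: sign_avg_const)
next
  case (Suc m)
  have "sign_avg (Suc m) (\<lambda>\<epsilon>. (c + (\<Sum>t<Suc m. \<epsilon> t * v t))\<^sup>2)
      = (\<Sum>s\<in>{-1,1}. sign_avg m (\<lambda>\<epsilon>. ((c + s * v m) + (\<Sum>t<m. \<epsilon> t * v t))\<^sup>2)) / 2"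
    unfolding sign_avg_Suc sum_lessThan_Suc_fun_upd by (simp add: algebra_simps)
  also have "\<dots> = c\<^sup>2 + (\<Sum>t<Suc m. (v t)\<^sup>2)"
    unfolding Suc.IH by (simp add: power2_eq_square algebra_simps)
  finally show ?case .
qed

lemma bounded_mult_left_comp:
  fixes f :: "'a \<Rightarrow> real"
  shows "bounded (f ` S) \<Longrightarrow> bounded ((\<lambda>x. c * f x) ` S)"
  using bounded_scaleR_comp[of f S c] by simp

lemma bounded_sum_comp:
  fixes f :: "'i \<Rightarrow> 'a \<Rightarrow> 'b::real_normed_vector"
  assumes "finite I" and "\<And>i. i \<in> I \<Longrightarrow> bounded (f i ` S)"
  shows "bounded ((\<lambda>x. \<Sum>i\<in>I. f i x) ` S)"
  using assms
  by (induction I rule: finite_induct) (auto simp: image_constant_conv intro: bounded_plus_comp)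

text \<open>With \<open>u, v\<close> the increments of \<open>p, q\<close> between \<open>w'\<close> and \<open>w\<close>, the Lipschitz bound
  is at most \<open>K (\<bar>u + v\<bar> + \<bar>u - v\<bar>)\<close>, and \<open>2K\<bar>u \<plusminus> v\<bar>\<close> is dominated by evaluating a pair of
  opposite sign choices, one at \<open>w\<close> and one at \<open>w'\<close>.\<close>

lemma SUP_contraction_step:
  fixes Z \<psi> p q :: "'a \<Rightarrow> real"
  assumes W: "W \<noteq> {}" and K: "K \<ge> 0"
    and bounded_Zpq: "bounded (Z ` W)" "bounded (p ` W)" "bounded (q ` W)"
    and lip: "\<And>w w'. w \<in> W \<Longrightarrow> w' \<in> W \<Longrightarrow> \<psi> w - \<psi> w' \<le> K * (\<bar>p w - p w'\<bar> + \<bar>q w - q w'\<bar>)"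
  shows "((SUP w\<in>W. Z w + \<psi> w) + (SUP w\<in>W. Z w - \<psi> w)) / 2
    \<le> (\<Sum>s\<in>{-1,1}. \<Sum>s'\<in>{-1,1}. SUP w\<in>W. Z w + 2 * K * (s * p w + s' * q w)) / 4"
proof -
  define M where "M s s' = (SUP w\<in>W. Z w + 2 * K * (s * p w + s' * q w))" for s s'
  have bdd: "bdd_above ((\<lambda>w. Z w + 2 * K * (s * p w + s' * q w)) ` W)" for s s'
    using bounded_Zpq
    by (intro bounded_imp_bdd_above bounded_plus_comp bounded_mult_left_comp) auto
  have opposite: "Z w + Z w' + 2 * K * (s * (p w - p w') + s' * (q w - q w')) \<le> M s s' + M (-s) (-s')"
    if "w \<in> W" "w' \<in> W" for w w' s s'
  proof -
    have "Z w + 2 * K * (s * p w + s' * q w) \<le> M s s'"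
      unfolding M_def using that(1) bdd by (rule cSUP_upper)
    moreover have "Z w' + 2 * K * (-s * p w' + -s' * q w') \<le> M (-s) (-s')"
      unfolding M_def using that(2) bdd by (rule cSUP_upper)
    ultimately show ?thesis by (simp add: algebra_simps)
  qed
  have abs_eq_sign: "\<exists>s\<in>{-1,1}. \<bar>u\<bar> = s * u" for u :: real
    by (cases "u \<ge> 0") auto
  define T where "T = (\<Sum>s\<in>{-1,1}. \<Sum>s'\<in>{-1,1}. M s s')"
  have pair: "(Z w + \<psi> w) + (Z w' - \<psi> w') \<le> T / 2" if w: "w \<in> W" "w' \<in> W" for w w'
  proof -
    define u v where "u = p w - p w'" and "v = q w - q w'"
    obtain s where s: "s \<in> {-1,1}" "\<bar>u + v\<bar> = s * (u + v)" using abs_eq_sign by blast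
    obtain r where r: "r \<in> {-1,1}" "\<bar>u - v\<bar> = r * (u - v)" using abs_eq_sign by blast
    have "Z w + Z w' + 2 * K * \<bar>u + v\<bar> \<le> M 1 1 + M (-1) (-1)"
      using opposite[OF w, of s s] s unfolding u_def v_def by (auto simp: algebra_simps)
    moreover have "Z w + Z w' + 2 * K * \<bar>u - v\<bar> \<le> M 1 (-1) + M (-1) 1"
      using opposite[OF w, of r "-r"] r unfolding u_def v_def by (auto simp: algebra_simps)
    moreover have "\<psi> w - \<psi> w' \<le> K * \<bar>u + v\<bar> + K * \<bar>u - v\<bar>"
    proof -
      have "\<bar>u\<bar> + \<bar>v\<bar> \<le> \<bar>u + v\<bar> + \<bar>u - v\<bar>" by (simp add: abs_if)
      then show ?thesis
        using lip[OF w] K mult_left_mono unfolding u_def v_def distrib_left[symmetric] by fastforce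
    qed
    ultimately show ?thesis unfolding T_def by simp
  qed
  have "(SUP w\<in>W. Z w + \<psi> w) \<le> T / 2 - (SUP w\<in>W. Z w - \<psi> w)"
  proof (rule cSUP_least[OF W])
    fix w assume "w \<in> W"
    have "(SUP w'\<in>W. Z w' - \<psi> w') \<le> T / 2 - (Z w + \<psi> w)"
      by (rule cSUP_least[OF W]) (use pair \<open>w \<in> W\<close> in force)
    then show "Z w + \<psi> w \<le> T / 2 - (SUP w\<in>W. Z w - \<psi> w)" by simp
  qed
  moreover have "\<And>x y t :: real. x \<le> t / 2 - y \<Longrightarrow> (x + y) / 2 \<le> t / 4"
    by (simp add: field_simps)
  ultimately show ?thesis unfolding T_def M_def by blast
qed

lemma sign_avg_SUP_contraction:
  fixes W :: "'a set" and Z :: "'a \<Rightarrow> real" and \<psi> p q :: "nat \<Rightarrow> 'a \<Rightarrow> real"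
  assumes "W \<noteq> {}" and "K \<ge> 0" and "bounded (Z ` W)"
    and "\<And>t. t < m \<Longrightarrow> bounded (\<psi> t ` W)"
    and "\<And>t. t < m \<Longrightarrow> bounded (p t ` W)"
    and "\<And>t. t < m \<Longrightarrow> bounded (q t ` W)"
    and "\<And>t w w'. t < m \<Longrightarrow> w \<in> W \<Longrightarrow> w' \<in> W \<Longrightarrow>
           \<psi> t w - \<psi> t w' \<le> K * (\<bar>p t w - p t w'\<bar> + \<bar>q t w - q t w'\<bar>)"
  shows "sign_avg m (\<lambda>\<epsilon>. SUP w\<in>W. Z w + (\<Sum>t<m. \<epsilon> t * \<psi> t w))
    \<le> sign_avg2 m (\<lambda>\<alpha> \<beta>. SUP w\<in>W. Z w + 2 * K * (\<Sum>t<m. \<alpha> t * p t w + \<beta> t * q t w))"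
  using assms
proof (induction m arbitrary: Z)
  case 0
  then show ?case by (simp add: sign_avg2_def sign_avg_const)
next
  case (Suc m)
  define Z' where "Z' \<alpha> \<beta> w = Z w + 2 * K * (\<Sum>t<m. \<alpha> t * p t w + \<beta> t * q t w)" for \<alpha> \<beta> w
  have bounded_Z': "bounded (Z' \<alpha> \<beta> ` W)" for \<alpha> \<beta>
    unfolding Z'_def using Suc.prems
    by (intro bounded_plus_comp bounded_mult_left_comp bounded_sum_comp) auto
  have IH: "sign_avg m (\<lambda>\<epsilon>. SUP w\<in>W. (Z w + s * \<psi> m w) + (\<Sum>t<m. \<epsilon> t * \<psi> t w))
      \<le> sign_avg2 m (\<lambda>\<alpha> \<beta>. SUP w\<in>W. Z' \<alpha> \<beta> w + s * \<psi> m w)" for s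
    using Suc.IH[of "\<lambda>w. Z w + s * \<psi> m w"] Suc.prems unfolding Z'_def
    by (simp add: bounded_plus_comp bounded_mult_left_comp add_ac)
  have "sign_avg (Suc m) (\<lambda>\<epsilon>. SUP w\<in>W. Z w + (\<Sum>t<Suc m. \<epsilon> t * \<psi> t w))
      = (\<Sum>s\<in>{-1,1}. sign_avg m (\<lambda>\<epsilon>. SUP w\<in>W. (Z w + s * \<psi> m w) + (\<Sum>t<m. \<epsilon> t * \<psi> t w))) / 2"
    unfolding sign_avg_Suc sum_lessThan_Suc_fun_upd by (simp add: add_ac)
  also have "\<dots> \<le> (\<Sum>s\<in>{-1,1}. sign_avg2 m (\<lambda>\<alpha> \<beta>. SUP w\<in>W. Z' \<alpha> \<beta> w + s * \<psi> m w)) / 2"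
    using IH[of 1] IH[of "-1"] by simp
  also have "\<dots> = sign_avg2 m (\<lambda>\<alpha> \<beta>. ((SUP w\<in>W. Z' \<alpha> \<beta> w + \<psi> m w) + (SUP w\<in>W. Z' \<alpha> \<beta> w - \<psi> m w)) / 2)"
    using sign_avg2_mult_left[of m "1/2"] by (simp add: sign_avg2_add)
  also have "\<dots> \<le> sign_avg2 m (\<lambda>\<alpha> \<beta>.
      (\<Sum>s\<in>{-1,1}. \<Sum>s'\<in>{-1,1}. SUP w\<in>W. Z' \<alpha> \<beta> w + 2 * K * (s * p m w + s' * q m w)) / 4)"
    using Suc.prems by (intro sign_avg2_mono SUP_contraction_step bounded_Z') auto
  also have "\<dots> = sign_avg2 (Suc m) (\<lambda>\<alpha> \<beta>. SUP w\<in>W. Z w + 2 * K * (\<Sum>t<Suc m. \<alpha> t * p t w + \<beta> t * q t w))"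
    unfolding sign_avg2_Suc Z'_def
    by (simp add: sum_lessThan_Suc_fun_upd2 algebra_simps)
  finally show ?case .
qed

lemma abs_sum_mult_le_L2_set: "\<bar>\<Sum>i\<in>A. f i * g i\<bar> \<le> L2_set f A * L2_set g A"
  using sum_abs[of "\<lambda>i. f i * g i" A] L2_set_mult_ineq[of f g A] by (simp add: abs_mult)

lemma abs_sum_mult_le:
  assumes "L2_set f A \<le> a" and "L2_set g A \<le> b"
  shows "\<bar>\<Sum>i\<in>A. f i * g i\<bar> \<le> a * b"
proof -
  have "\<bar>\<Sum>i\<in>A. f i * g i\<bar> \<le> L2_set f A * L2_set g A" by (rule abs_sum_mult_le_L2_set)
  also have "\<dots> \<le> a * b" using assms by (intro mult_mono) (auto intro: order_trans[OF L2_set_nonneg])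
  finally show ?thesis .
qed

lemma sign_avg2_square_sum:
  "sign_avg2 m (\<lambda>\<alpha> \<beta>. \<Sum>i<d. (\<Sum>t<m. \<alpha> t * x t i + \<beta> t * y t i)\<^sup>2)
     = (\<Sum>t<m. \<Sum>i<d. (x t i)\<^sup>2 + (y t i)\<^sup>2)"
proof -
  have square_sum: "sign_avg m (\<lambda>\<epsilon>. (\<Sum>t<m. \<epsilon> t * v t)\<^sup>2) = (\<Sum>t<m. (v t)\<^sup>2)" for v
    using sign_avg_square_sum[of m 0 v] by simp
  have "sign_avg2 m (\<lambda>\<alpha> \<beta>. \<Sum>i<d. (\<Sum>t<m. \<alpha> t * x t i + \<beta> t * y t i)\<^sup>2)
      = (\<Sum>i<d. sign_avg m (\<lambda>\<alpha>. sign_avg m (\<lambda>\<beta>.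
           ((\<Sum>t<m. \<alpha> t * x t i) + (\<Sum>t<m. \<beta> t * y t i))\<^sup>2)))"
    unfolding sign_avg2_def by (simp add: sign_avg_sum sum.distrib)
  also have "\<dots> = (\<Sum>i<d. (\<Sum>t<m. (x t i)\<^sup>2) + (\<Sum>t<m. (y t i)\<^sup>2))"
    by (simp add: sign_avg_square_sum sign_avg_add sign_avg_const square_sum)
  also have "\<dots> = (\<Sum>t<m. \<Sum>i<d. (x t i)\<^sup>2 + (y t i)\<^sup>2)"
    by (simp add: sum.distrib sum.swap[of _ "{..<d}"])
  finally show ?thesis .
qed

lemma sign_avg2_SUP_linear_le:
  fixes x y :: "nat \<Rightarrow> nat \<Rightarrow> real"
  assumes "a \<ge> 0" and "c \<ge> 0"
  shows "sign_avg2 m (\<lambda>\<alpha> \<beta>. SUP w\<in>{w. L2_set w {..<d} \<le> a}.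
           c * (\<Sum>t<m. \<alpha> t * (\<Sum>i<d. w i * x t i) + \<beta> t * (\<Sum>i<d. w i * y t i)))
    \<le> c * a * sqrt (\<Sum>t<m. \<Sum>i<d. (x t i)\<^sup>2 + (y t i)\<^sup>2)"
proof -
  define N where "N \<alpha> \<beta> = L2_set (\<lambda>i. \<Sum>t<m. \<alpha> t * x t i + \<beta> t * y t i) {..<d}" for \<alpha> \<beta>
  have "(SUP w\<in>{w. L2_set w {..<d} \<le> a}.
           c * (\<Sum>t<m. \<alpha> t * (\<Sum>i<d. w i * x t i) + \<beta> t * (\<Sum>i<d. w i * y t i))) \<le> c * a * N \<alpha> \<beta>"
    for \<alpha> \<beta>
  proof (rule cSUP_least)
    show "{w. L2_set w {..<d} \<le> a} \<noteq> {}"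
      using assms(1) by (auto intro!: exI[of _ "\<lambda>_. 0"] simp: L2_set_0')
  next
    fix w assume w: "w \<in> {w. L2_set w {..<d} \<le> a}"
    have "(\<Sum>t<m. \<alpha> t * (\<Sum>i<d. w i * x t i) + \<beta> t * (\<Sum>i<d. w i * y t i))
        = (\<Sum>i<d. w i * (\<Sum>t<m. \<alpha> t * x t i + \<beta> t * y t i))"
      by (simp add: sum_distrib_left sum.distrib sum.swap[of _ "{..<m}"] algebra_simps)
    also have "\<dots> \<le> L2_set w {..<d} * N \<alpha> \<beta>"
      unfolding N_def using abs_sum_mult_le_L2_set by (rule abs_le_D1)
    also have "\<dots> \<le> a * N \<alpha> \<beta>"
      using w by (intro mult_right_mono) (auto simp: N_def)
    finally show "c * (\<Sum>t<m. \<alpha> t * (\<Sum>i<d. w i * x t i) + \<beta> t * (\<Sum>i<d. w i * y t i))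
        \<le> c * a * N \<alpha> \<beta>"
      using assms(2) by (simp add: mult.assoc mult_left_mono)
  qed
  then have "sign_avg2 m (\<lambda>\<alpha> \<beta>. SUP w\<in>{w. L2_set w {..<d} \<le> a}.
           c * (\<Sum>t<m. \<alpha> t * (\<Sum>i<d. w i * x t i) + \<beta> t * (\<Sum>i<d. w i * y t i)))
      \<le> c * a * sign_avg2 m N"
    by (subst sign_avg2_mult_left[symmetric]) (rule sign_avg2_mono)
  also have "\<dots> \<le> c * a * sqrt (sign_avg2 m (\<lambda>\<alpha> \<beta>. (N \<alpha> \<beta>)\<^sup>2))"
    using assms by (intro mult_left_mono sign_avg2_le_sqrt) auto
  also have "\<dots> = c * a * sqrt (\<Sum>t<m. \<Sum>i<d. (x t i)\<^sup>2 + (y t i)\<^sup>2)"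
    unfolding N_def L2_set_def by (simp add: sum_nonneg sign_avg2_square_sum)
  finally show ?thesis .
qed

lemma lipschitz_square_diff_le:
  fixes \<phi> :: "real \<Rightarrow> real"
  assumes lip: "\<forall>s t. \<bar>\<phi> s - \<phi> t\<bar> \<le> L * \<bar>s - t\<bar>" and "\<phi> 0 = 0"
    and bounds: "\<bar>p\<bar> \<le> r" "\<bar>q\<bar> \<le> r" "\<bar>p'\<bar> \<le> r" "\<bar>q'\<bar> \<le> r"
  shows "(\<phi> p - \<phi> q)\<^sup>2 - (\<phi> p' - \<phi> q')\<^sup>2 \<le> 4 * L\<^sup>2 * r * (\<bar>p - p'\<bar> + \<bar>q - q'\<bar>)"
proof -
  have L: "L \<ge> 0" using lip[rule_format, of 1 0] by simp
  have small: "\<bar>\<phi> s\<bar> \<le> L * r" if "\<bar>s\<bar> \<le> r" for s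
    using lip[rule_format, of s 0] \<open>\<phi> 0 = 0\<close> mult_left_mono[OF that L] by simp
  define D D' where "D = \<phi> p - \<phi> q" and "D' = \<phi> p' - \<phi> q'"
  have "\<bar>D - D'\<bar> \<le> \<bar>\<phi> p - \<phi> p'\<bar> + \<bar>\<phi> q - \<phi> q'\<bar>"
    unfolding D_def D'_def by linarith
  also have "\<dots> \<le> L * (\<bar>p - p'\<bar> + \<bar>q - q'\<bar>)"
    using lip by (simp add: distrib_left add_mono)
  finally have diff: "\<bar>D - D'\<bar> \<le> L * (\<bar>p - p'\<bar> + \<bar>q - q'\<bar>)" .
  have sum: "\<bar>D + D'\<bar> \<le> 4 * L * r"
    using small[OF bounds(1)] small[OF bounds(2)] small[OF bounds(3)] small[OF bounds(4)]
    unfolding D_def D'_def by linarith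
  have "D\<^sup>2 - D'\<^sup>2 \<le> \<bar>D - D'\<bar> * \<bar>D + D'\<bar>"
    by (simp add: power2_eq_square algebra_simps flip: abs_mult)
  also have "\<dots> \<le> L * (\<bar>p - p'\<bar> + \<bar>q - q'\<bar>) * (4 * L * r)"
    using diff sum L by (intro mult_mono) auto
  finally show ?thesis
    unfolding D_def D'_def by (simp add: power2_eq_square algebra_simps)
qed

definition column_loss ::
  "nat \<Rightarrow> (real \<Rightarrow> real) \<Rightarrow> (nat \<Rightarrow> real) \<Rightarrow> (nat \<Rightarrow> real) \<Rightarrow> (nat \<Rightarrow> real) \<Rightarrow> real" where
  "column_loss d \<phi> u v w = (\<phi> (\<Sum>i<d. w i * u i) - \<phi> (\<Sum>i<d. w i * v i))\<^sup>2"

lemma zeta_eq_column_average: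
  "zeta k (\<lambda>j. \<phi> (matT_vec d A u j)) (\<lambda>j. \<phi> (matT_vec d A v j))
     = (1 / real k) * (\<Sum>j<k. column_loss d \<phi> u v (\<lambda>i. A i j))"
  unfolding zeta_def matT_vec_def column_loss_def ..

lemma column_loss_diff_le:
  fixes \<phi> :: "real \<Rightarrow> real"
  assumes lip: "\<forall>s t. \<bar>\<phi> s - \<phi> t\<bar> \<le> L * \<bar>s - t\<bar>" and \<phi>0: "\<phi> 0 = 0"
    and "L2_set u {..<d} \<le> b" "L2_set v {..<d} \<le> b" "L2_set w {..<d} \<le> a" "L2_set w' {..<d} \<le> a"
  shows "column_loss d \<phi> u v w - column_loss d \<phi> u v w'
    \<le> 4 * L\<^sup>2 * (a * b) * (\<bar>(\<Sum>i<d. w i * u i) - (\<Sum>i<d. w' i * u i)\<bar>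
                           + \<bar>(\<Sum>i<d. w i * v i) - (\<Sum>i<d. w' i * v i)\<bar>)"
  unfolding column_loss_def
  by (intro lipschitz_square_diff_le[OF lip \<phi>0] abs_sum_mult_le assms)

lemma bounded_column_loss:
  fixes \<phi> :: "real \<Rightarrow> real"
  assumes lip: "\<forall>s t. \<bar>\<phi> s - \<phi> t\<bar> \<le> L * \<bar>s - t\<bar>" and \<phi>0: "\<phi> 0 = 0"
    and u: "L2_set u {..<d} \<le> b" and v: "L2_set v {..<d} \<le> b" and "a \<ge> 0"
  shows "bounded (column_loss d \<phi> u v ` {w. L2_set w {..<d} \<le> a})"
proof -
  have "\<bar>column_loss d \<phi> u v w\<bar> \<le> 4 * L\<^sup>2 * (a * b) * (a * b + a * b)"
    if w: "L2_set w {..<d} \<le> a" for w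
  proof -
    have zero: "L2_set (\<lambda>_. 0) {..<d} \<le> a" using \<open>a \<ge> 0\<close> by (simp add: L2_set_0')
    have "column_loss d \<phi> u v w = column_loss d \<phi> u v w - column_loss d \<phi> u v (\<lambda>_. 0)"
      by (simp add: column_loss_def \<phi>0)
    also have "\<dots> \<le> 4 * L\<^sup>2 * (a * b) * (\<bar>\<Sum>i<d. w i * u i\<bar> + \<bar>\<Sum>i<d. w i * v i\<bar>)"
      using column_loss_diff_le[OF lip \<phi>0 u v w zero] by simp
    also have "\<dots> \<le> 4 * L\<^sup>2 * (a * b) * (a * b + a * b)"
      using w u v \<open>a \<ge> 0\<close> order_trans[OF L2_set_nonneg u]
      by (intro mult_left_mono add_mono abs_sum_mult_le) auto
    finally show ?thesis by (simp add: column_loss_def)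
  qed
  then show ?thesis by (auto simp: bounded_iff intro!: exI[of _ "4 * L\<^sup>2 * (a * b) * (a * b + a * b)"])
qed

lemma G_ball_column_le:
  assumes "A \<in> G_ball d k a" and "j < k"
  shows "L2_set (\<lambda>i. A i j) {..<d} \<le> a"
proof -
  have "L2_set (\<lambda>i. A i j) {..<d} \<le> norm_2_inf d k A"
    unfolding norm_2_inf_def L2_set_def using assms(2) by (intro Max_ge) auto
  then show ?thesis using assms(1) unfolding G_ball_def by simp
qed

lemma zero_in_G_ball: "k \<ge> 1 \<Longrightarrow> a \<ge> 0 \<Longrightarrow> (\<lambda>_ _. 0) \<in> G_ball d k a"
proof -
  assume "k \<ge> 1" "a \<ge> 0"
  then have "{sqrt (\<Sum>i<d. ((\<lambda>_ _. 0::real) i j)\<^sup>2) | j. j < k} = {0}"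
    by (auto intro: exI[of _ 0])
  with \<open>a \<ge> 0\<close> show ?thesis unfolding G_ball_def matrices_def norm_2_inf_def by simp
qed

lemma Sup_F_class_le_SUP_column_loss:
  assumes "k \<ge> 1" and "a \<ge> 0"
    and bounded_loss: "\<And>t. t < n \<Longrightarrow> bounded (column_loss d \<phi> (x t) (x' t) ` {w. L2_set w {..<d} \<le> a})"
  shows "Sup ((\<lambda>f. \<Sum>t<n. \<epsilon> t * f t) ` F_class n d k \<phi> x x' (G_ball d k a))
    \<le> (SUP w\<in>{w. L2_set w {..<d} \<le> a}. \<Sum>t<n. \<epsilon> t * column_loss d \<phi> (x t) (x' t) w)"
    (is "_ \<le> ?S")
  unfolding F_class_def image_image
proof (rule cSUP_least)
  show "G_ball d k a \<noteq> {}" using zero_in_G_ball assms(1,2) by blast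
next
  fix A assume A: "A \<in> G_ball d k a"
  have bdd: "bdd_above ((\<lambda>w. \<Sum>t<n. \<epsilon> t * column_loss d \<phi> (x t) (x' t) w) ` {w. L2_set w {..<d} \<le> a})"
    using bounded_loss by (intro bounded_imp_bdd_above bounded_sum_comp bounded_mult_left_comp) auto
  have "(\<Sum>t<n. \<epsilon> t * (if t < n then zeta k (\<lambda>j. \<phi> (matT_vec d A (x t) j))
          (\<lambda>j. \<phi> (matT_vec d A (x' t) j)) else 0))
      = (1 / real k) * (\<Sum>j<k. \<Sum>t<n. \<epsilon> t * column_loss d \<phi> (x t) (x' t) (\<lambda>i. A i j))"
    unfolding zeta_eq_column_average
    by (simp add: sum_distrib_left sum.swap[of _ "{..<k}"] algebra_simps)
  also have "\<dots> \<le> (1 / real k) * (\<Sum>j<k. ?S)"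
    using G_ball_column_le[OF A] by (intro mult_left_mono sum_mono cSUP_upper[OF _ bdd]) auto
  also have "\<dots> = ?S" using assms(1) by simp
  finally show "(\<Sum>t<n. \<epsilon> t * (if t < n then zeta k (\<lambda>j. \<phi> (matT_vec d A (x t) j))
          (\<lambda>j. \<phi> (matT_vec d A (x' t) j)) else 0)) \<le> ?S" .
qed

lemma sum_sample_norms_le:
  fixes x y :: "nat \<Rightarrow> nat \<Rightarrow> real"
  assumes "\<And>t. t < n \<Longrightarrow> L2_set (x t) {..<d} \<le> b \<and> L2_set (y t) {..<d} \<le> b" and "b \<ge> 0"
  shows "sqrt (\<Sum>t<n. \<Sum>i<d. (x t i)\<^sup>2 + (y t i)\<^sup>2) \<le> sqrt n * sqrt 2 * b"
proof -
  have "(\<Sum>t<n. \<Sum>i<d. (x t i)\<^sup>2 + (y t i)\<^sup>2) \<le> (\<Sum>t<n. 2 * b\<^sup>2)"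
  proof (rule sum_mono)
    fix t assume "t \<in> {..<n}"
    then have "(\<Sum>i<d. (x t i)\<^sup>2) \<le> b\<^sup>2" "(\<Sum>i<d. (y t i)\<^sup>2) \<le> b\<^sup>2"
      using assms(1) unfolding L2_set_def by (auto intro: sqrt_le_D)
    then show "(\<Sum>i<d. (x t i)\<^sup>2 + (y t i)\<^sup>2) \<le> 2 * b\<^sup>2" by (simp add: sum.distrib)
  qed
  then have "sqrt (\<Sum>t<n. \<Sum>i<d. (x t i)\<^sup>2 + (y t i)\<^sup>2) \<le> sqrt (n * 2 * b\<^sup>2)"
    by simp
  also have "\<dots> = sqrt n * sqrt 2 * b"
    using assms(2) by (simp add: real_sqrt_mult)
  finally show ?thesis .
qed

lemma rademacher_F_class_le:
  fixes \<phi> :: "real \<Rightarrow> real" and x x' :: "nat \<Rightarrow> nat \<Rightarrow> real"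
  assumes n: "n \<ge> 1" and k: "k \<ge> 1"
    and lip: "\<forall>s t. \<bar>\<phi> s - \<phi> t\<bar> \<le> L * \<bar>s - t\<bar>" and \<phi>0: "\<phi> 0 = 0"
    and b: "b \<ge> 0" and x_le: "\<forall>t<n. sqrt (\<Sum>i<d. (x t i)\<^sup>2) \<le> b \<and> sqrt (\<Sum>i<d. (x' t i)\<^sup>2) \<le> b"
    and a: "a \<ge> 0"
  shows "rademacher n (F_class n d k \<phi> x x' (G_ball d k a)) \<le> 8 * sqrt 2 * (a\<^sup>2 * b\<^sup>2 * L\<^sup>2 / sqrt n)"
proof -
  define W where "W = {w. L2_set w {..<d} \<le> a}"
  define p where "p t w = (\<Sum>i<d. w i * x t i)" for t w
  define q where "q t w = (\<Sum>i<d. w i * x' t i)" for t w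
  define \<psi> where "\<psi> t = column_loss d \<phi> (x t) (x' t)" for t
  define K where "K = 4 * L\<^sup>2 * (a * b)"
  have K: "K \<ge> 0" using a b by (simp add: K_def)
  have x_L2: "L2_set (x t) {..<d} \<le> b \<and> L2_set (x' t) {..<d} \<le> b" if "t < n" for t
    using x_le that by (simp add: L2_set_def)
  have bounded_\<psi>: "bounded (\<psi> t ` W)" if "t < n" for t
    unfolding \<psi>_def W_def using x_L2[OF that] by (intro bounded_column_loss[OF lip \<phi>0] a) auto
  have bounded_p: "bounded (p t ` W)" and bounded_q: "bounded (q t ` W)" if "t < n" for t
    using x_L2[OF that] abs_sum_mult_le[of _ "{..<d}" a]
    by (auto simp: bounded_iff W_def p_def q_def intro!: exI[of _ "a * b"])
  have \<psi>_lip: "\<psi> t w - \<psi> t w' \<le> K * (\<bar>p t w - p t w'\<bar> + \<bar>q t w - q t w'\<bar>)"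
    if "t < n" "w \<in> W" "w' \<in> W" for t w w'
    unfolding \<psi>_def K_def p_def q_def
    using x_L2 that by (intro column_loss_diff_le[OF lip \<phi>0]) (auto simp: W_def)
  have "(\<lambda>_. 0) \<in> W" using a by (simp add: W_def L2_set_0')
  then have contraction: "sign_avg n (\<lambda>\<epsilon>. SUP w\<in>W. \<Sum>t<n. \<epsilon> t * \<psi> t w)
      \<le> sign_avg2 n (\<lambda>\<alpha> \<beta>. SUP w\<in>W. 2 * K * (\<Sum>t<n. \<alpha> t * p t w + \<beta> t * q t w))"
    using sign_avg_SUP_contraction[of W K "\<lambda>_. 0" n \<psi> p q] K bounded_\<psi> bounded_p bounded_q \<psi>_lip
    by (auto simp: image_constant_conv)
  have linear: "sign_avg2 n (\<lambda>\<alpha> \<beta>. SUP w\<in>W. 2 * K * (\<Sum>t<n. \<alpha> t * p t w + \<beta> t * q t w))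
      \<le> 2 * K * a * sqrt (\<Sum>t<n. \<Sum>i<d. (x t i)\<^sup>2 + (x' t i)\<^sup>2)"
    unfolding W_def p_def q_def using a K by (intro sign_avg2_SUP_linear_le) auto
  have "rademacher n (F_class n d k \<phi> x x' (G_ball d k a))
      = (1 / n) * sign_avg n (\<lambda>\<epsilon>. Sup ((\<lambda>f. \<Sum>t<n. \<epsilon> t * f t) ` F_class n d k \<phi> x x' (G_ball d k a)))"
    unfolding rademacher_def sign_avg_def sign_vectors_def ..
  also have "\<dots> \<le> (1 / n) * sign_avg n (\<lambda>\<epsilon>. SUP w\<in>W. \<Sum>t<n. \<epsilon> t * \<psi> t w)"
    unfolding W_def \<psi>_def using k a bounded_\<psi>
    by (intro mult_left_mono sign_avg_mono Sup_F_class_le_SUP_column_loss) (auto simp: W_def \<psi>_def)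
  also have "\<dots> \<le> (1 / n) * (2 * K * a * sqrt (\<Sum>t<n. \<Sum>i<d. (x t i)\<^sup>2 + (x' t i)\<^sup>2))"
    using order_trans[OF contraction linear] by (intro mult_left_mono) auto
  also have "\<dots> \<le> (1 / n) * (2 * K * a * (sqrt n * sqrt 2 * b))"
    using sum_sample_norms_le[of n x d b x', OF x_L2 b] K a by (intro mult_left_mono) auto
  also have "\<dots> = 8 * sqrt 2 * (a\<^sup>2 * b\<^sup>2 * L\<^sup>2 / sqrt n)"
  proof -
    define s where "s = sqrt n"
    have s: "real n = s * s" "s > 0" using n by (auto simp: s_def)
    show ?thesis unfolding s_def[symmetric] s(1) using s(2) by (simp add: K_def field_simps power2_eq_square)
  qed
  finally show ?thesis .
qed

lemma log_factor_ge:
  assumes "d \<ge> 1" and "u \<ge> 0"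
  shows "1 / 4 \<le> sqrt (ln (2 * real d)) * ln (2 + u)"
proof -
  have ln2: "1 / 2 \<le> ln (2::real)" using ln2_ge_two_thirds by simp
  have "ln 2 \<le> ln (2 * real d)" using assms(1) by simp
  then have ln_d: "(1 / 2)\<^sup>2 \<le> ln (2 * real d)" using ln2 by (simp add: power2_eq_square)
  then have sqrt_ln: "1 / 2 \<le> sqrt (ln (2 * real d))" by (rule real_le_rsqrt)
  have "ln 2 \<le> ln (2 + u)" using assms(2) by simp
  then have ln_u: "1 / 2 \<le> ln (2 + u)" using ln2 by simp
  have "1 / 2 * (1 / 2) \<le> sqrt (ln (2 * real d)) * ln (2 + u)"
    using sqrt_ln ln_u ln_d by (intro mult_mono) (auto simp: power2_eq_square)
  then show ?thesis by simp
qed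

theorem theorem2:
  shows "\<exists>C>0. \<forall>(n::nat) (d::nat) (k::nat) (\<phi>::real \<Rightarrow> real) (L::real) (b::real)
      (x::nat \<Rightarrow> nat \<Rightarrow> real) (x'::nat \<Rightarrow> nat \<Rightarrow> real) (a::real).
      n \<ge> 1 \<longrightarrow> d \<ge> 1 \<longrightarrow> k \<ge> 1 \<longrightarrow>
      (\<forall>s t. \<bar>\<phi> s - \<phi> t\<bar> \<le> L * \<bar>s - t\<bar>) \<longrightarrow> \<phi> 0 = 0 \<longrightarrow>
      b > 0 \<longrightarrow>
      (\<forall>t<n. sqrt (\<Sum>i<d. (x t i)\<^sup>2) \<le> b \<and> sqrt (\<Sum>i<d. (x' t i)\<^sup>2) \<le> b) \<longrightarrow>
      a > 0 \<longrightarrow>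
      rademacher n (F_class n d k \<phi> x x' (G_ball d k a))
        \<le> C * (1 / real n + (a\<^sup>2 * b\<^sup>2 * L\<^sup>2 / sqrt (real n)) * sqrt (ln (2 * real d))
                 * ln (2 + real n * b\<^sup>2 * a\<^sup>2 * L\<^sup>2))"
proof (intro exI[of _ 48] conjI allI impI)
  fix n d k :: nat and \<phi> :: "real \<Rightarrow> real" and L b a :: real and x x' :: "nat \<Rightarrow> nat \<Rightarrow> real"
  assume n: "n \<ge> 1" and d: "d \<ge> 1" and k: "k \<ge> 1"
    and lip: "\<forall>s t. \<bar>\<phi> s - \<phi> t\<bar> \<le> L * \<bar>s - t\<bar>" and \<phi>0: "\<phi> 0 = 0" and b: "b > 0"
    and x_le: "\<forall>t<n. sqrt (\<Sum>i<d. (x t i)\<^sup>2) \<le> b \<and> sqrt (\<Sum>i<d. (x' t i)\<^sup>2) \<le> b"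
    and a: "a > 0"
  define r where "r = a\<^sup>2 * b\<^sup>2 * L\<^sup>2 / sqrt n"
  define g where "g = sqrt (ln (2 * real d)) * ln (2 + real n * b\<^sup>2 * a\<^sup>2 * L\<^sup>2)"
  have r: "r \<ge> 0" by (simp add: r_def)
  have "sqrt 2 \<le> (3 / 2 :: real)" by (rule real_le_lsqrt) (auto simp: power2_eq_square)
  have "rademacher n (F_class n d k \<phi> x x' (G_ball d k a)) \<le> 8 * sqrt 2 * r"
    unfolding r_def using n k lip \<phi>0 b x_le a by (intro rademacher_F_class_le) auto
  also have "\<dots> \<le> 48 * (r * (1 / 4))"
    using \<open>sqrt 2 \<le> 3 / 2\<close> r by (simp add: mult_right_mono)
  also have "\<dots> \<le> 48 * (r * g)"
    unfolding g_def using log_factor_ge[OF d] r by (intro mult_left_mono) auto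
  also have "\<dots> \<le> 48 * (1 / n + r * g)" by simp
  finally show "rademacher n (F_class n d k \<phi> x x' (G_ball d k a))
      \<le> 48 * (1 / n + (a\<^sup>2 * b\<^sup>2 * L\<^sup>2 / sqrt n) * sqrt (ln (2 * real d))
               * ln (2 + real n * b\<^sup>2 * a\<^sup>2 * L\<^sup>2))"
    unfolding r_def g_def by (simp add: mult.assoc)
qed simp

end
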